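(* Let $0<\rho_{\max}$ and $0<w_{\min}\le w_{\max}$, and let $V:[0,\rho_{\max})\times[w_{\min},w_{\max}]\to\mathbb{R}$, $(\rho,w)\mapsto V(\rho,w)$, be a $C^2$ function such that the generalized flow rate $Q(\rho,w)=\rho\,V(\rho,w)$ satisfies $\frac{\partial^2 Q}{\partial\rho^2}(\rho,w)<0$ for all $(\rho,w)$ in the domain. Define the characteristic velocities $$\lambda^{(1)}(\rho,w)=V(\rho,w)+\rho\,\frac{\partial V}{\partial\rho}(\rho,w),\qquad \lambda^{(2)}(\rho,w)=V(\rho,w).$$ Then for all $(\rho,w)$ in the domain, $\frac{\partial\lambda^{(1)}}{\partial\rho}(\rho,w)<0$ and $\frac{\partial\lambda^{(2)}}{\partial\rho}(\rho,w)<0$, where the partial derivatives in $\rho$ are taken with $w$ held fixed.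
   Context: This concerns the generalized Aw-Rascle-Zhang (GARZ) traffic model $\rho_t+(\rho u)_x=0$, $w_t+u w_x=0$ with $u=V(\rho,w)$, where $\rho$ is the vehicle density, $w$ the empty road velocity and $V$ the generalized velocity function. Written in conservative variables $(\rho,q)$ with $q=\rho w$, the flux is $(u\rho,uq)$, and the eigenvalues of its Jacobian are $\lambda^{(1)}=u+\rho\,\partial V/\partial\rho$ and $\lambda^{(2)}=u$, with $\partial V/\partial\rho$ computed at fixed $w$. *)

theory Defs
  imports "HOL-Analysis.Analysis"
begin

definition C2_on :: "(real \<times> real) set \<Rightarrow> (real \<times> real \<Rightarrow> real) \<Rightarrow> bool" where
  "C2_on D f \<longleftrightarrow>
     (\<exists>f' :: real \<times> real \<Rightarrow> ((real \<times> real) \<Rightarrow>\<^sub>L real).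
      \<exists>f'' :: real \<times> real \<Rightarrow> ((real \<times> real) \<Rightarrow>\<^sub>L ((real \<times> real) \<Rightarrow>\<^sub>L real)).
        (\<forall>p\<in>D. (f has_derivative blinfun_apply (f' p)) (at p within D)) \<and>
        continuous_on D f' \<and>
        (\<forall>p\<in>D. (f' has_derivative blinfun_apply (f'' p)) (at p within D)) \<and>
        continuous_on D f'')"

definition d_rho :: "(real \<times> real) set \<Rightarrow> (real \<times> real \<Rightarrow> real) \<Rightarrow> real \<times> real \<Rightarrow> real" where
  "d_rho D g p = (THE d. ((\<lambda>s. g (s, snd p)) has_real_derivative d)
                         (at (fst p) within {s. (s, snd p) \<in> D}))"

end

theory Submission
  imports Defs
begin

text \<open>Along a slice of fixed \<open>w\<close>, \<open>\<lambda>\<^sub>1 = \<partial>Q/\<partial>\<rho>\<close>, so \<open>\<partial>\<lambda>\<^sub>1/\<partial>\<rho> = \<partial>\<^sup>2Q/\<partial>\<rho>\<^sup>2 < 0\<close> directly.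
  For \<open>\<lambda>\<^sub>2\<close> write \<open>u = \<partial>V/\<partial>\<rho>\<close>; then \<open>\<partial>\<^sup>2Q/\<partial>\<rho>\<^sup>2 = 2u + \<rho>u'\<close>, and
  \<open>(\<rho>\<^sup>2 u)' = \<rho>(2u + \<rho>u') < 0\<close> for \<open>\<rho> > 0\<close>. Hence \<open>\<rho>\<^sup>2 u\<close> is strictly decreasing from
  its value \<open>0\<close> at \<open>\<rho> = 0\<close>, which forces \<open>u < 0\<close>; at \<open>\<rho> = 0\<close> itself \<open>2u < 0\<close>.\<close>

lemma has_field_derivative_horizontal_slice:
  fixes g :: "real \<times> real \<Rightarrow> real"
  assumes "\<And>p. p \<in> D \<Longrightarrow> (g has_derivative g' p) (at p within D)"
    and "(\<lambda>t. (t, w)) ` S \<subseteq> D" "t \<in> S" "linear (g' (t, w))"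
  shows "((\<lambda>t. g (t, w)) has_real_derivative g' (t, w) (1, 0)) (at t within S)"
proof -
  have "((\<lambda>t. (t, w)) has_derivative (\<lambda>h. (h, 0))) (at t within S)"
    by (auto intro!: derivative_eq_intros)
  then have "((\<lambda>t. g (t, w)) has_derivative (\<lambda>h. g' (t, w) (h, 0))) (at t within S)"
    using has_derivative_in_compose2[OF assms(1-3)] by simp
  moreover have "(\<lambda>h. g' (t, w) (h, 0)) = (\<lambda>h. g' (t, w) (1, 0) * h)"
  proof
    fix h :: real
    have "(h, 0) = h *\<^sub>R ((1::real), (0::real))" by simp
    then show "g' (t, w) (h, 0) = g' (t, w) (1, 0) * h"
      using linear_scale[OF assms(4)] by (metis real_scaleR_def mult.commute)
  qed
  ultimately show ?thesis
    by (simp add: has_field_derivative_def)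
qed

lemma C2_on_horizontal_slice_derivatives:
  assumes "C2_on D V" "(\<lambda>t. (t, w)) ` S \<subseteq> D"
  obtains u u' :: "real \<Rightarrow> real"
  where "\<And>t. t \<in> S \<Longrightarrow> ((\<lambda>t. V (t, w)) has_real_derivative u t) (at t within S)"
    and "\<And>t. t \<in> S \<Longrightarrow> (u has_real_derivative u' t) (at t within S)"
proof -
  obtain f' :: "real \<times> real \<Rightarrow> ((real \<times> real) \<Rightarrow>\<^sub>L real)"
    and f'' :: "real \<times> real \<Rightarrow> ((real \<times> real) \<Rightarrow>\<^sub>L ((real \<times> real) \<Rightarrow>\<^sub>L real))"
    where f': "\<And>p. p \<in> D \<Longrightarrow> (V has_derivative blinfun_apply (f' p)) (at p within D)"
      and f'': "\<And>p. p \<in> D \<Longrightarrow> (f' has_derivative blinfun_apply (f'' p)) (at p within D)"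
    using assms(1) unfolding C2_on_def by blast
  define e :: "real \<times> real" where "e = (1, 0)"
  have f'_e: "((\<lambda>p. f' p e) has_derivative (\<lambda>h. f'' p h e)) (at p within D)" if "p \<in> D" for p
    using bounded_linear.has_derivative[OF blinfun.bounded_linear_left f''[OF that]] .
  have lin: "linear (\<lambda>h. f'' q h e)" for q
    by (intro bounded_linear.linear bounded_linear_intros blinfun.bounded_linear_left)
  show thesis
  proof
    show "((\<lambda>t. V (t, w)) has_real_derivative f' (t, w) e) (at t within S)" if "t \<in> S" for t
      using has_field_derivative_horizontal_slice[OF f' assms(2) that
          bounded_linear.linear[OF blinfun.bounded_linear_right]]
      by (simp add: e_def)
    show "((\<lambda>t. f' (t, w) e) has_real_derivative f'' (t, w) e e) (at t within S)" if "t \<in> S" for t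
      using has_field_derivative_horizontal_slice[OF f'_e assms(2) that lin] by (simp add: e_def)
  qed
qed

lemma THE_real_derivative_atLeastLessThan:
  fixes a b s d :: real
  assumes "a < b" "s \<in> {a..<b}" "(f has_real_derivative d) (at s within {a..<b})"
  shows "(THE d. (f has_real_derivative d) (at s within {a..<b})) = d"
proof (rule the_equality)
  show "(f has_real_derivative d) (at s within {a..<b})" by (rule assms(3))
next
  fix d' assume "(f has_real_derivative d') (at s within {a..<b})"
  moreover have "at s within {a..<b} \<noteq> bot"
    using assms(1,2) by (simp add: trivial_limit_within islimpt_Ico)
  ultimately show "d' = d"
    using vector_derivative_unique_within assms(3)
    by (metis has_real_derivative_iff_has_vector_derivative)
qed

lemma d_rho_rectangle_eqI:
  assumes "a < b" "t \<in> {a..<b}" "w \<in> W"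
    and "\<And>s. s \<in> {a..<b} \<Longrightarrow> g (s, w) = f s"
    and "(f has_real_derivative d) (at t within {a..<b})"
  shows "d_rho ({a..<b} \<times> W) g (t, w) = d"
proof -
  have "{s. (s, w) \<in> {a..<b} \<times> W} = {a..<b}"
    using assms(3) by auto
  moreover have "((\<lambda>s. g (s, w)) has_real_derivative d) (at t within {a..<b})"
    using has_field_derivative_transform_within[OF assms(5) zero_less_one assms(2)] assms(4)
    by simp
  ultimately show ?thesis
    using THE_real_derivative_atLeastLessThan[OF assms(1,2)] by (simp add: d_rho_def)
qed

lemma neg_of_twice_plus_scaled_deriv_neg:
  fixes u u' :: "real \<Rightarrow> real" and b s :: real
  assumes deriv: "\<And>t. t \<in> {0..<b} \<Longrightarrow> (u has_real_derivative u' t) (at t within {0..<b})"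
    and neg: "\<And>t. t \<in> {0..<b} \<Longrightarrow> 2 * u t + t * u' t < 0"
    and s: "s \<in> {0..<b}"
  shows "u s < 0"
proof (cases "s = 0")
  case True
  then show ?thesis using neg[OF s] by simp
next
  case False
  then have s_pos: "0 < s" using s by simp
  define g where "g t = t\<^sup>2 * u t" for t
  have g_deriv: "(g has_real_derivative t * (2 * u t + t * u' t)) (at t within {0..<b})"
    if "t \<in> {0..<b}" for t
    unfolding g_def using DERIV_mult'[OF DERIV_pow[of 2 t] deriv[OF that]]
    by (simp add: power2_eq_square algebra_simps)
  have "g s < g 0"
  proof (rule DERIV_neg_imp_decreasing_open[OF s_pos])
    fix x assume x: "0 < x" "x < s"
    then have x_in: "x \<in> {0..<b}" "x \<in> {0<..<b}" using s by auto
    have "(g has_real_derivative x * (2 * u x + x * u' x)) (at x within {0<..<b})"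
      by (rule DERIV_subset[OF g_deriv[OF x_in(1)]]) auto
    then have "(g has_real_derivative x * (2 * u x + x * u' x)) (at x)"
      using at_within_open[OF x_in(2)] by simp
    moreover have "x * (2 * u x + x * u' x) < 0"
      using neg[OF x_in(1)] x by (simp add: mult_pos_neg)
    ultimately show "\<exists>y. (g has_real_derivative y) (at x) \<and> y < 0" by blast
  next
    have "continuous_on {0..<b} g"
      using g_deriv DERIV_continuous continuous_on_eq_continuous_within by blast
    then show "continuous_on {0..s} g"
      by (rule continuous_on_subset) (use s in auto)
  qed
  then have "s\<^sup>2 * u s < 0" by (simp add: g_def)
  then show ?thesis using s_pos by (simp add: mult_less_0_iff)
qed

theorem lemma2:
  fixes rho_max w_min w_max :: real
    and V :: "real \<times> real \<Rightarrow> real"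
  defines "D \<equiv> {0..<rho_max} \<times> {w_min..w_max}"
  defines "Q \<equiv> (\<lambda>p. fst p * V p)"
  defines "lam1 \<equiv> (\<lambda>p. V p + fst p * d_rho D V p)"
  defines "lam2 \<equiv> V"
  assumes "0 < rho_max" and "0 < w_min" and "w_min \<le> w_max"
    and "C2_on D V"
    and "\<forall>p\<in>D. d_rho D (d_rho D Q) p < 0"
  shows "\<forall>p\<in>D. d_rho D lam1 p < 0 \<and> d_rho D lam2 p < 0"
proof
  fix p assume "p \<in> D"
  then obtain s w where p: "p = (s, w)" and s: "s \<in> {0..<rho_max}" and w: "w \<in> {w_min..w_max}"
    by (auto simp: D_def)
  let ?S = "{0..<rho_max}"
  note d_rho_eqI = d_rho_rectangle_eqI[OF assms(5) _ w, folded D_def]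
  have slice_in_D: "(\<lambda>t. (t, w)) ` ?S \<subseteq> D"
    using w by (auto simp: D_def)
  obtain u u' where V_deriv: "\<And>t. t \<in> ?S \<Longrightarrow> ((\<lambda>t. V (t, w)) has_real_derivative u t) (at t within ?S)"
    and u_deriv: "\<And>t. t \<in> ?S \<Longrightarrow> (u has_real_derivative u' t) (at t within ?S)"
    using C2_on_horizontal_slice_derivatives[OF assms(8) slice_in_D] by blast
  have dV: "d_rho D V (t, w) = u t" if "t \<in> ?S" for t
    using d_rho_eqI[OF that _ V_deriv[OF that]] by simp
  have Q_deriv: "((\<lambda>t. t * V (t, w)) has_real_derivative V (t, w) + t * u t) (at t within ?S)"
    if "t \<in> ?S" for t
    using DERIV_mult'[OF DERIV_ident V_deriv[OF that]] by (simp add: algebra_simps)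
  have dQ: "d_rho D Q (t, w) = V (t, w) + t * u t" if "t \<in> ?S" for t
    using d_rho_eqI[OF that _ Q_deriv[OF that]] by (simp add: Q_def)
  have flux_deriv: "((\<lambda>t. V (t, w) + t * u t) has_real_derivative 2 * u t + t * u' t) (at t within ?S)"
    if "t \<in> ?S" for t
    using DERIV_add[OF V_deriv[OF that] DERIV_mult'[OF DERIV_ident u_deriv[OF that]]] by simp
  have Q_second_neg: "2 * u t + t * u' t < 0" if "t \<in> ?S" for t
    using assms(9) slice_in_D that d_rho_eqI[OF that dQ flux_deriv[OF that]] by force
  have "d_rho D lam1 (s, w) = 2 * u s + s * u' s"
    using d_rho_eqI[OF s _ flux_deriv[OF s]] dV by (simp add: lam1_def)
  moreover have "d_rho D lam2 (s, w) = u s"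
    using dV[OF s] by (simp add: lam2_def)
  ultimately show "d_rho D lam1 p < 0 \<and> d_rho D lam2 p < 0"
    using p Q_second_neg[OF s] neg_of_twice_plus_scaled_deriv_neg[OF u_deriv Q_second_neg s]
    by simp
qed

end
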